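(* Let $N$ be a finite nonempty set, $p\notin N$ and $N'=N\cup\{p\}$. Let $\mathscr{C}^1\neq\mathscr{C}^2$ be minimal balanced collections on $N$ with balancing weights $\lambda^{\mathscr{C}^1},\lambda^{\mathscr{C}^2}$, and let $\mathscr{C}=\mathscr{C}^1\cup\mathscr{C}^2=\{S_1,\dots,S_k\}$. Assume that the $n\times k$ matrix $A^{\mathscr{C}}$ with columns $\mathbf{1}^{S_1},\dots,\mathbf{1}^{S_k}$ has rank $k-1$. Define $\mu,\nu\in\mathbb{R}^{\mathscr{C}}$ by $\mu_S=\lambda^{\mathscr{C}^1}_S$ if $S\in\mathscr{C}^1$ and $\mu_S=0$ otherwise, and $\nu_S=\lambda^{\mathscr{C}^2}_S$ if $S\in\mathscr{C}^2$ and $\nu_S=0$ otherwise. Let $I\subseteq[k]$ be such that $\mu_I\neq\nu_I$ (where $\mu_I=\sum_{i\in I}\mu_{S_i}$, similarly $\nu_I$) and $$t^I=\frac{1-\mu_I}{\nu_I-\mu_I}\in\,]0,1[.$$ Then $\mathscr{C}'=\{S_i\cup\{p\}\mid i\in I\}\cup\{S_i\mid i\in[k]\setminus I\}$ is a minimal balanced collection on $N'$, with balancing weights $(1-t^I)\mu_{S_i}+t^I\nu_{S_i}$ for the set coming from $S_i$.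
   Context: For $T\subseteq N$, $\mathbf{1}^T\in\mathbb{R}^N$ denotes the characteristic vector of $T$; $n=|N|$. A collection $\mathscr{B}$ of nonempty subsets of a finite set $N$ is balanced if there exist positive weights $(\lambda_S)_{S\in\mathscr{B}}$ (balancing weights) with $\sum_{S\in\mathscr{B}}\lambda_S\mathbf{1}^S=\mathbf{1}^N$. A balanced collection is minimal if it contains no balanced proper subcollection; equivalently, its system of balancing weights is unique. $[k]=\{1,\dots,k\}$. *)

theory Defs
  imports "HOL-Analysis.Analysis"
begin

definition balancing_weights :: "'a set \<Rightarrow> 'a set set \<Rightarrow> ('a set \<Rightarrow> real) \<Rightarrow> bool" where
  "balancing_weights N B lam \<longleftrightarrow>
     (\<forall>S\<in>B. lam S > 0) \<and> (\<forall>i\<in>N. (\<Sum>S\<in>B. if i \<in> S then lam S else 0) = 1)"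

definition balanced :: "'a set \<Rightarrow> 'a set set \<Rightarrow> bool" where
  "balanced N B \<longleftrightarrow> finite B \<and> (\<forall>S\<in>B. S \<noteq> {} \<and> S \<subseteq> N) \<and> (\<exists>lam. balancing_weights N B lam)"

definition minimal_balanced :: "'a set \<Rightarrow> 'a set set \<Rightarrow> bool" where
  "minimal_balanced N B \<longleftrightarrow> balanced N B \<and> (\<forall>B'. B' \<subset> B \<longrightarrow> \<not> balanced N B')"

definition charvec :: "'a::finite set \<Rightarrow> real^'a" where
  "charvec T = (\<chi> i. if i \<in> T then 1 else 0)"

end

theory Submission
  imports Defs
begin

text \<open>Both \<open>\<mu>\<close> and \<open>\<nu>\<close> solve \<open>A\<^sup>\<C> x = \<one>\<^sup>N\<close>, and the rank
  hypothesis makes the kernel of \<open>A\<^sup>\<C>\<close> one-dimensional, so every solution has the form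
  \<open>(1 - s) \<mu> + s \<nu>\<close>. Adding \<open>p\<close> to the sets indexed by \<open>I\<close> adds the single equation
  \<open>x\<^sub>I = 1\<close>, which on this line of solutions has the unique root \<open>s = t\<^sup>I\<close>. Hence the
  lifted collection is balanced exactly by the weights \<open>(1 - t\<^sup>I) \<mu> + t\<^sup>I \<nu>\<close>, which are
  positive on all of \<open>\<C>\<close> because \<open>0 < t\<^sup>I < 1\<close>. A balanced subcollection would carry
  weights that solve the same system, hence coincide with these and vanish nowhere,
  so it is the whole collection.\<close>

text \<open>\<open>coverage B w i\<close> is the \<open>i\<close>-th entry of \<open>A\<^sup>B w\<close>.\<close>

definition coverage :: "'a set set \<Rightarrow> ('a set \<Rightarrow> real) \<Rightarrow> 'a \<Rightarrow> real" where
  "coverage B w i = (\<Sum>S\<in>B. if i \<in> S then w S else 0)"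

lemma balancing_weights_iff_coverage:
  "balancing_weights N B w \<longleftrightarrow> (\<forall>S\<in>B. 0 < w S) \<and> (\<forall>i\<in>N. coverage B w i = 1)"
  by (simp add: balancing_weights_def coverage_def)

lemma coverage_restrict:
  assumes "finite C" "B \<subseteq> C"
  shows "coverage C (\<lambda>S. if S \<in> B then w S else 0) i = coverage B w i"
  unfolding coverage_def
  by (rule sum.mono_neutral_cong_right) (use assms in auto)

lemma coverage_image:
  "inj_on f C \<Longrightarrow> coverage (f ` C) w i = (\<Sum>S\<in>C. if i \<in> f S then w (f S) else 0)"
  by (simp add: coverage_def sum.reindex)

lemma coverage_lincomb:
  "coverage C (\<lambda>S. a * x S + b * y S) i = a * coverage C x i + b * coverage C y i"
  unfolding coverage_def sum_distrib_left sum.distrib[symmetric] by (rule sum.cong) auto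

lemma sum_charvec_nth: "(\<Sum>S\<in>C. x S *\<^sub>R charvec S) $ i = coverage C x i"
  by (simp add: coverage_def charvec_def sum_component if_distrib cong: if_cong)

lemma sum_charvec_diff_eq_0:
  assumes "\<forall>S\<in>C. S \<subseteq> N" "\<forall>i\<in>N. coverage C x i = 1" "\<forall>i\<in>N. coverage C y i = 1"
  shows "(\<Sum>S\<in>C. (x S - y S) *\<^sub>R charvec S) = 0"
proof (rule vec_eq_iff[THEN iffD2], intro allI)
  fix i
  have "coverage C (\<lambda>S. x S - y S) i = coverage C x i - coverage C y i"
    unfolding coverage_def sum_subtractf[symmetric] by (rule sum.cong) auto
  moreover have "coverage C x i = 0" "coverage C y i = 0" if "i \<notin> N"
    using that assms(1) by (fastforce simp: coverage_def intro!: sum.neutral)+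
  ultimately show "(\<Sum>S\<in>C. (x S - y S) *\<^sub>R charvec S) $ i = 0 $ i"
    unfolding sum_charvec_nth using assms(2,3) by (cases "i \<in> N") simp_all
qed

lemma inj_charvec: "inj charvec"
  by (rule injI) (auto simp: charvec_def vec_eq_iff split: if_splits)

lemma independent_image_sum_eq_0:
  fixes g :: "'b \<Rightarrow> 'v::euclidean_space"
  assumes "independent (g ` W)" "inj_on g W" "(\<Sum>T\<in>W. c T *\<^sub>R g T) = 0" "T \<in> W"
  shows "c T = 0"
proof -
  have "(\<Sum>v\<in>g ` W. c (inv_into W g v) *\<^sub>R v) = 0"
    using assms(2,3) by (simp add: sum.reindex)
  then have "\<forall>v\<in>g ` W. c (inv_into W g v) = 0"
    using assms(1) unfolding independent_explicit
    by (elim conjE allE[where x = "\<lambda>v. c (inv_into W g v)"]) simp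
  then have "c (inv_into W g (g T)) = 0"
    using assms(4) by blast
  then show ?thesis
    using assms(2,4) by simp
qed

lemma independent_image_remove_dependent:
  fixes g :: "'b \<Rightarrow> 'v::euclidean_space"
  assumes "finite V" "inj_on g V" "dim (g ` V) = card V - 1" "T0 \<in> V"
    and "(\<Sum>T\<in>V. b T *\<^sub>R g T) = 0" "b T0 \<noteq> 0"
  shows "independent (g ` (V - {T0}))"
proof -
  let ?W = "g ` (V - {T0})"
  have "b T0 *\<^sub>R g T0 = - (\<Sum>T\<in>V - {T0}. b T *\<^sub>R g T)"
    using assms(1,4,5) by (simp add: sum.remove eq_neg_iff_add_eq_0)
  then have "g T0 = inverse (b T0) *\<^sub>R - (\<Sum>T\<in>V - {T0}. b T *\<^sub>R g T)"
    using assms(6) by (metis scaleR_scaleR left_inverse scaleR_one)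
  also have "\<dots> = (\<Sum>T\<in>V - {T0}. (- b T / b T0) *\<^sub>R g T)"
    by (simp add: scaleR_sum_right sum_negf[symmetric] divide_inverse mult.commute)
  also have "\<dots> \<in> span ?W"
    by (intro span_sum span_scale span_base) auto
  finally have "span (g ` V) = span ?W"
    using assms(4) by (metis image_insert insert_Diff span_redundant)
  then have "dim ?W = card ?W"
    using assms(1-4) by (metis dim_span card_image inj_on_diff card_Diff_singleton)
  then show ?thesis
    using assms(1) card_eq_dim[of ?W ?W] by (simp add: span_superset)
qed

lemma dependency_proportional:
  fixes g :: "'b \<Rightarrow> 'v::euclidean_space"
  assumes "finite V" "inj_on g V" "dim (g ` V) = card V - 1" "T0 \<in> V"
    and "(\<Sum>T\<in>V. b T *\<^sub>R g T) = 0" "b T0 \<noteq> 0"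
    and "(\<Sum>T\<in>V. a T *\<^sub>R g T) = 0" "T \<in> V"
  shows "a T = a T0 / b T0 * b T"
proof -
  define c where "c T = a T - a T0 / b T0 * b T" for T
  have "(\<Sum>T\<in>V. (a T0 / b T0 * b T) *\<^sub>R g T) = (a T0 / b T0) *\<^sub>R (\<Sum>T\<in>V. b T *\<^sub>R g T)"
    by (simp add: scaleR_sum_right)
  then have "(\<Sum>T\<in>V. c T *\<^sub>R g T) = 0"
    using assms(5,7) by (simp add: c_def scaleR_diff_left sum_subtractf)
  moreover have "c T0 = 0"
    using assms(6) by (simp add: c_def)
  ultimately have "(\<Sum>T\<in>V - {T0}. c T *\<^sub>R g T) = 0"
    using assms(1,4) by (simp add: sum.remove)
  then have "c T = 0"
    using independent_image_remove_dependent[OF assms(1-6)] \<open>c T0 = 0\<close> assms(2,8)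
    by (cases "T = T0") (auto intro: independent_image_sum_eq_0 inj_on_diff)
  then show ?thesis
    by (simp add: c_def)
qed

lemma coverage_solutions_affine:
  assumes "finite C" "\<forall>S\<in>C. S \<subseteq> N" "dim (charvec ` C) = card C - 1"
    and "\<forall>i\<in>N. coverage C mu i = 1" "\<forall>i\<in>N. coverage C nu i = 1"
    and "T0 \<in> C" "mu T0 \<noteq> nu T0"
    and "\<forall>i\<in>N. coverage C x i = 1"
  obtains s where "\<forall>T\<in>C. x T = (1 - s) * mu T + s * nu T"
proof -
  define s where "s = (x T0 - mu T0) / (nu T0 - mu T0)"
  have "x T - mu T = s * (nu T - mu T)" if "T \<in> C" for T
    using dependency_proportional[OF assms(1) inj_on_subset[OF inj_charvec] assms(3,6)
        sum_charvec_diff_eq_0[OF assms(2,5,4)] _ sum_charvec_diff_eq_0[OF assms(2,8,4)] that]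
      assms(7) by (simp add: s_def)
  then show ?thesis
    using that[of s] by (simp add: algebra_simps)
qed

text \<open>The collection \<open>\<C>'\<close> of the theorem is \<open>lift p (S ` I) ` \<C>\<close>.\<close>

definition lift :: "'a \<Rightarrow> 'a set set \<Rightarrow> 'a set \<Rightarrow> 'a set" where
  "lift p A T = (if T \<in> A then insert p T else T)"

lemma mem_lift: "i \<in> lift p A T \<longleftrightarrow> T \<in> A \<and> i = p \<or> i \<in> T"
  by (auto simp: lift_def)

lemma inj_on_lift: "\<forall>T\<in>C. p \<notin> T \<Longrightarrow> inj_on (lift p A) C"
  by (rule inj_onI) (auto simp: lift_def split: if_splits dest: insert_ident)

lemma coverage_lift:
  assumes "finite C" "A \<subseteq> C" "\<forall>T\<in>C. p \<notin> T"
  shows "coverage (lift p A ` C) w i =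
    (if i = p then (\<Sum>T\<in>A. w (lift p A T)) else coverage C (\<lambda>T. w (lift p A T)) i)"
proof (cases "i = p")
  case True
  then have "coverage (lift p A ` C) w i = (\<Sum>T\<in>C. if T \<in> A then w (lift p A T) else 0)"
    using assms(3) by (simp add: coverage_image inj_on_lift mem_lift)
  also have "\<dots> = (\<Sum>T\<in>A. w (lift p A T))"
    using assms(1,2) by (simp add: sum.If_cases Int_absorb1)
  finally show ?thesis
    using True by simp
qed (use assms(3) in \<open>simp add: coverage_image inj_on_lift mem_lift, simp add: coverage_def\<close>)

lemma balancing_weights_lift:
  assumes "finite C" "A \<subseteq> C" "\<forall>T\<in>C. p \<notin> T"
    and "\<forall>T\<in>C. 0 < x T" "\<forall>i\<in>N. coverage C x i = 1" "sum x A = 1"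
    and "\<forall>T\<in>C. w (lift p A T) = x T"
  shows "balancing_weights (insert p N) (lift p A ` C) w"
proof -
  have "coverage C (\<lambda>T. w (lift p A T)) = coverage C x"
    unfolding coverage_def using assms(7) by (intro ext sum.cong) auto
  moreover have "(\<Sum>T\<in>A. w (lift p A T)) = sum x A"
    using assms(2,7) by (auto intro!: sum.cong)
  ultimately show ?thesis
    using assms by (auto simp: balancing_weights_iff_coverage coverage_lift)
qed

lemma minimal_balanced_lift:
  assumes C: "finite C" "\<forall>S\<in>C. S \<noteq> {} \<and> S \<subseteq> N" "p \<notin> N" "A \<subseteq> C"
    and dim: "dim (charvec ` C) = card C - 1"
    and mu: "\<forall>i\<in>N. coverage C mu i = 1" and nu: "\<forall>i\<in>N. coverage C nu i = 1"
    and "sum mu A \<noteq> sum nu A"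
    and pos: "\<forall>T\<in>C. 0 < (1 - t) * mu T + t * nu T"
    and t: "(1 - t) * sum mu A + t * sum nu A = 1"
  shows "minimal_balanced (insert p N) (lift p A ` C)"
    and "\<forall>T\<in>C. w (lift p A T) = (1 - t) * mu T + t * nu T
      \<Longrightarrow> balancing_weights (insert p N) (lift p A ` C) w"
proof -
  define W where "W = (\<lambda>T. (1 - t) * mu T + t * nu T)"
  have pC: "\<forall>T\<in>C. p \<notin> T"
    using C(2,3) by auto
  have weights: "balancing_weights (insert p N) (lift p A ` C) w" if "\<forall>T\<in>C. w (lift p A T) = W T" for w
  proof (rule balancing_weights_lift[OF C(1,4) pC _ _ _ that])
    show "\<forall>i\<in>N. coverage C W i = 1"
      using mu nu by (simp add: W_def coverage_lincomb)
    show "sum W A = 1"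
      using t by (simp add: W_def sum.distrib sum_distrib_left)
  qed (use pos in \<open>simp add: W_def\<close>)
  then show "\<forall>T\<in>C. w (lift p A T) = (1 - t) * mu T + t * nu T
      \<Longrightarrow> balancing_weights (insert p N) (lift p A ` C) w"
    by (simp add: W_def)
  have "balancing_weights (insert p N) (lift p A ` C) (\<lambda>U. W (inv_into C (lift p A) U))"
    using inj_on_lift[OF pC] by (intro weights) simp
  then have balanced: "balanced (insert p N) (lift p A ` C)"
    using C(1,2) by (auto simp: balanced_def lift_def)
  have "\<not> balanced (insert p N) B'" if sub: "B' \<subset> lift p A ` C" for B'
  proof
    assume "balanced (insert p N) B'"
    then obtain v where v: "\<forall>i\<in>insert p N. coverage B' v i = 1"
      by (auto simp: balanced_def balancing_weights_iff_coverage)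
    define x where "x = (\<lambda>T. if lift p A T \<in> B' then v (lift p A T) else 0)"
    have cov_B': "coverage (lift p A ` C) (\<lambda>U. if U \<in> B' then v U else 0) i = 1" if "i \<in> insert p N" for i
      using coverage_restrict[of "lift p A ` C" B' v i] sub C(1) v that by auto
    have cov_x: "\<forall>i\<in>N. coverage C x i = 1"
    proof
      fix i assume "i \<in> N"
      then show "coverage C x i = 1"
        using cov_B'[of i] coverage_lift[OF C(1,4) pC] C(3) by (auto simp: x_def split: if_splits)
    qed
    have sum_x: "sum x A = 1"
      using cov_B'[of p] coverage_lift[OF C(1,4) pC] by (simp add: x_def)
    obtain T0 where "T0 \<in> A" "mu T0 \<noteq> nu T0"
      using \<open>sum mu A \<noteq> sum nu A\<close> by (meson sum.cong)
    then obtain s where x: "\<forall>T\<in>C. x T = (1 - s) * mu T + s * nu T"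
      using coverage_solutions_affine[OF C(1) _ dim mu nu _ _ cov_x] C(2,4) by blast
    have "(1 - s) * sum mu A + s * sum nu A = 1"
      using sum_x x C(4) by (simp add: subset_iff sum.distrib sum_distrib_left)
    with t have "(s - t) * (sum nu A - sum mu A) = 0"
      by (simp add: algebra_simps)
    with \<open>sum mu A \<noteq> sum nu A\<close> have "s = t"
      by simp
    have x_eq_W: "x T = W T" if "T \<in> C" for T
      using x that \<open>s = t\<close> by (simp add: W_def)
    have "lift p A ` C \<subseteq> B'"
    proof (rule image_subsetI, rule ccontr)
      fix T assume "T \<in> C" "lift p A T \<notin> B'"
      then show False
        using x_eq_W[of T] pos by (auto simp: x_def W_def)
    qed
    with sub show False
      by blast
  qed
  with balanced show "minimal_balanced (insert p N) (lift p A ` C)"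
    by (simp add: minimal_balanced_def)
qed

lemma lift_image_indexed:
  assumes "bij_betw S K C" "I \<subseteq> K"
  shows "lift p (S ` I) ` C = (\<lambda>i. insert p (S i)) ` I \<union> S ` (K - I)"
    and "i \<in> K \<Longrightarrow> lift p (S ` I) (S i) = (if i \<in> I then insert p (S i) else S i)"
proof -
  have inj: "inj_on S K" and C: "C = S ` K"
    using assms(1) by (auto simp: bij_betw_def)
  show lift_S: "lift p (S ` I) (S i) = (if i \<in> I then insert p (S i) else S i)" if "i \<in> K" for i
    using inj_on_image_mem_iff[OF inj that assms(2)] by (simp add: lift_def)
  have "K = I \<union> (K - I)"
    using assms(2) by blast
  then have "lift p (S ` I) ` C = (\<lambda>i. lift p (S ` I) (S i)) ` I \<union> (\<lambda>i. lift p (S ` I) (S i)) ` (K - I)"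
    unfolding C image_image by (metis image_Un)
  also have "\<dots> = (\<lambda>i. insert p (S i)) ` I \<union> S ` (K - I)"
    using lift_S assms(2) by (auto intro!: image_cong arg_cong2[where f = "(\<union>)"])
  finally show "lift p (S ` I) ` C = (\<lambda>i. insert p (S i)) ` I \<union> S ` (K - I)" .
qed

lemma convex_combination_pos:
  fixes a b t :: real
  assumes "0 < t" "t < 1" "0 \<le> a" "0 \<le> b" "0 < a \<or> 0 < b"
  shows "0 < (1 - t) * a + t * b"
proof -
  have "0 \<le> (1 - t) * a" "0 \<le> t * b"
    using assms by simp_all
  moreover have "0 < (1 - t) * a \<or> 0 < t * b"
    using assms by auto
  ultimately show ?thesis
    by linarith
qed

theorem lemma4p4:
  fixes N :: "'a::finite set" and p :: 'a
    and C1 C2 :: "'a set set" and lam1 lam2 :: "'a set \<Rightarrow> real"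
    and k :: nat and S :: "nat \<Rightarrow> 'a set" and I :: "nat set"
  assumes "N \<noteq> {}" and "p \<notin> N"
    and "minimal_balanced N C1" and "minimal_balanced N C2" and "C1 \<noteq> C2"
    and "balancing_weights N C1 lam1" and "balancing_weights N C2 lam2"
    and "bij_betw S {1..k} (C1 \<union> C2)"
    and "dim (charvec ` (C1 \<union> C2)) = k - 1"
    and "I \<subseteq> {1..k}"
    and "(\<Sum>i\<in>I. (if S i \<in> C1 then lam1 (S i) else 0)) \<noteq> (\<Sum>i\<in>I. (if S i \<in> C2 then lam2 (S i) else 0))"
    and "0 < (1 - (\<Sum>i\<in>I. (if S i \<in> C1 then lam1 (S i) else 0))) /
              ((\<Sum>i\<in>I. (if S i \<in> C2 then lam2 (S i) else 0)) - (\<Sum>i\<in>I. (if S i \<in> C1 then lam1 (S i) else 0)))"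
    and "(1 - (\<Sum>i\<in>I. (if S i \<in> C1 then lam1 (S i) else 0))) /
              ((\<Sum>i\<in>I. (if S i \<in> C2 then lam2 (S i) else 0)) - (\<Sum>i\<in>I. (if S i \<in> C1 then lam1 (S i) else 0))) < 1"
  shows "let mu = (\<lambda>T. if T \<in> C1 then lam1 T else 0);
             nu = (\<lambda>T. if T \<in> C2 then lam2 T else 0);
             muI = (\<Sum>i\<in>I. mu (S i)); nuI = (\<Sum>i\<in>I. nu (S i));
             t = (1 - muI) / (nuI - muI);
             C' = (\<lambda>i. insert p (S i)) ` I \<union> S ` ({1..k} - I)
         in minimal_balanced (insert p N) C' \<and>
            (\<forall>w. (\<forall>i\<in>{1..k}. w (if i \<in> I then insert p (S i) else S i) = (1 - t) * mu (S i) + t * nu (S i))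
                 \<longrightarrow> balancing_weights (insert p N) C' w)"
proof -
  define C where "C = C1 \<union> C2"
  define mu where "mu = (\<lambda>T. if T \<in> C1 then lam1 T else 0)"
  define nu where "nu = (\<lambda>T. if T \<in> C2 then lam2 T else 0)"
  define t where "t = (1 - (\<Sum>i\<in>I. mu (S i))) / ((\<Sum>i\<in>I. nu (S i)) - (\<Sum>i\<in>I. mu (S i)))"
  have bij: "bij_betw S {1..k} C" and finite: "finite C"
    using assms(8) bij_betw_finite by (auto simp: C_def)
  have sets: "\<forall>T\<in>C. T \<noteq> {} \<and> T \<subseteq> N"
    using assms(3,4) by (auto simp: C_def minimal_balanced_def balanced_def)
  have w1: "\<forall>T\<in>C1. 0 < lam1 T" "\<forall>i\<in>N. coverage C mu i = 1"
    using assms(6) coverage_restrict[OF finite] by (auto simp: C_def mu_def balancing_weights_iff_coverage)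
  have w2: "\<forall>T\<in>C2. 0 < lam2 T" "\<forall>i\<in>N. coverage C nu i = 1"
    using assms(7) coverage_restrict[OF finite] by (auto simp: C_def nu_def balancing_weights_iff_coverage)
  have "inj_on S I"
    using bij assms(10) by (auto simp: bij_betw_def intro: inj_on_subset)
  then have sum_I: "(\<Sum>i\<in>I. f (S i)) = sum f (S ` I)" for f :: "'a set \<Rightarrow> real"
    by (simp add: sum.reindex)
  have "(\<Sum>i\<in>I. mu (S i)) \<noteq> (\<Sum>i\<in>I. nu (S i))" and t: "0 < t" "t < 1"
    using assms(11-13) unfolding t_def mu_def nu_def .
  then have neq: "sum mu (S ` I) \<noteq> sum nu (S ` I)"
    by (simp add: sum_I)
  then have "t * (sum nu (S ` I) - sum mu (S ` I)) = 1 - sum mu (S ` I)"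
    by (simp add: t_def sum_I)
  then have t_eq: "(1 - t) * sum mu (S ` I) + t * sum nu (S ` I) = 1"
    by (simp add: algebra_simps)
  have pos: "\<forall>T\<in>C. 0 < (1 - t) * mu T + t * nu T"
    using t w1(1) w2(1) by (auto simp: C_def mu_def nu_def intro!: convex_combination_pos)
  have sub: "S ` I \<subseteq> C"
    using assms(10) bij by (auto simp: bij_betw_def)
  have dim: "dim (charvec ` C) = card C - 1"
    using assms(9) bij_betw_same_card[OF bij] by (simp add: C_def)
  note lifted = minimal_balanced_lift[OF finite sets assms(2) sub dim w1(2) w2(2) neq pos t_eq]
  have "\<forall>T\<in>C. w (lift p (S ` I) T) = (1 - t) * mu T + t * nu T"
    if "\<forall>i\<in>{1..k}. w (if i \<in> I then insert p (S i) else S i) = (1 - t) * mu (S i) + t * nu (S i)" for w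
    using that lift_image_indexed(2)[OF bij assms(10)] bij by (auto simp: bij_betw_def)
  then show ?thesis
    using lifted unfolding lift_image_indexed(1)[OF bij assms(10)] Let_def mu_def nu_def t_def
    by blast
qed

end
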